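(* Let $n\ge 2$ and let $\lvert\psi\rangle\in(\mathbb{C}^d)^{\otimes n}$ be a unit vector with Schmidt decomposition across qudit $1$ versus qudits $2,\ldots,n$ given by $\lvert\psi\rangle=\sum_{i=1}^d\alpha_i\lvert w_i\rangle\lvert v_i\rangle$, where $\alpha_i\ge0$, $\{\lvert w_i\rangle\}\subseteq\mathbb{C}^d$ and $\{\lvert v_i\rangle\}\subseteq(\mathbb{C}^d)^{\otimes n-1}$ are orthonormal sets. Define $\rho:=\sum_{i=1}^d\alpha_i^2\,\lvert w_i\rangle\langle w_i\rvert\otimes\lvert v_i\rangle\langle v_i\rvert$. Let $\Pi$ be a projector acting on some subset $\mathcal{S}\subseteq\{1,\ldots,n\}$ of the qudits (i.e. a projector on the qudits in $\mathcal{S}$ tensored with the identity on the others). If $\Pi$ crosses the Schmidt cut, i.e. $1\in\mathcal{S}$ and $\mathcal{S}\cap\{2,\ldots,n\}\neq\emptyset$, then $\mathrm{Tr}(\Pi\rho)\ge\frac1d\mathrm{Tr}(\Pi\lvert\psi\rangle\langle\psi\rvert)$. Otherwise $\mathrm{Tr}(\Pi\rho)=\mathrm{Tr}(\Pi\lvert\psi\rangle\langle\psi\rvert)$. *)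

theory Defs
  imports Complex_Main "HOL-Library.Complex_Order"
begin

text \<open>Qudits are numbered 0,...,n-1 (paper's qudit k is index k-1).
  A computational basis state of the qudits in an index set S is a function
  x :: nat => nat with x k < d for k in S and x k = 0 outside S.
  Vectors are functions from basis states to complex numbers, operators are
  matrices indexed by basis states.\<close>

definition configs :: "nat set \<Rightarrow> nat \<Rightarrow> (nat \<Rightarrow> nat) set" where
  "configs S d = {x. (\<forall>k\<in>S. x k < d) \<and> (\<forall>k. k \<notin> S \<longrightarrow> x k = 0)}"

definition restr :: "nat set \<Rightarrow> (nat \<Rightarrow> nat) \<Rightarrow> (nat \<Rightarrow> nat)" where
  "restr S x = (\<lambda>k. if k \<in> S then x k else 0)"

text \<open>basis state of qudits 2..n (indices 1..n-1), shifted to indices 0..n-2\<close>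
definition tail_cfg :: "(nat \<Rightarrow> nat) \<Rightarrow> (nat \<Rightarrow> nat)" where
  "tail_cfg x = (\<lambda>k. x (Suc k))"

definition mtrace :: "'i set \<Rightarrow> ('i \<Rightarrow> 'i \<Rightarrow> complex) \<Rightarrow> complex" where
  "mtrace I A = (\<Sum>x\<in>I. A x x)"

definition mmult :: "'i set \<Rightarrow> ('i \<Rightarrow> 'i \<Rightarrow> complex) \<Rightarrow> ('i \<Rightarrow> 'i \<Rightarrow> complex) \<Rightarrow> ('i \<Rightarrow> 'i \<Rightarrow> complex)" where
  "mmult I A B = (\<lambda>x y. \<Sum>z\<in>I. A x z * B z y)"

definition outer :: "('i \<Rightarrow> complex) \<Rightarrow> ('i \<Rightarrow> complex) \<Rightarrow> ('i \<Rightarrow> 'i \<Rightarrow> complex)" where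
  "outer u v = (\<lambda>x y. u x * cnj (v y))"

definition is_projector :: "'i set \<Rightarrow> ('i \<Rightarrow> 'i \<Rightarrow> complex) \<Rightarrow> bool" where
  "is_projector I P \<longleftrightarrow> (\<forall>a\<in>I. \<forall>b\<in>I. P a b = cnj (P b a) \<and> mmult I P P a b = P a b)"

text \<open>P acting on the qudits in S, tensored with the identity on the remaining qudits of {..<n}\<close>
definition embed_op :: "nat \<Rightarrow> nat set \<Rightarrow> ((nat \<Rightarrow> nat) \<Rightarrow> (nat \<Rightarrow> nat) \<Rightarrow> complex)
    \<Rightarrow> ((nat \<Rightarrow> nat) \<Rightarrow> (nat \<Rightarrow> nat) \<Rightarrow> complex)" where
  "embed_op n S P = (\<lambda>x y. P (restr S x) (restr S y) *
      (if \<forall>k\<in>{..<n} - S. x k = y k then 1 else 0))"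

definition orthonormal_fam :: "nat \<Rightarrow> 'i set \<Rightarrow> (nat \<Rightarrow> 'i \<Rightarrow> complex) \<Rightarrow> bool" where
  "orthonormal_fam d I u \<longleftrightarrow>
     (\<forall>i<d. \<forall>j<d. (\<Sum>x\<in>I. cnj (u i x) * u j x) = (if i = j then 1 else 0))"

end

theory Submission
  imports Defs
begin

text \<open>Write \<open>phi i\<close> for the product vector \<open>w i \<otimes> v i\<close>, so that
  \<open>psi = (\<Sum>i<d. alpha i * phi i)\<close> and \<open>rho = (\<Sum>i<d. alpha i ^ 2 * |phi i><phi i|)\<close>.
  Then \<open>Tr(Pi rho) = (\<Sum>i<d. alpha i ^ 2 * <phi i|Pi|phi i>)\<close>, whereas
  \<open>Tr(Pi |psi><psi|) = \<parallel>\<Sum>i<d. alpha i * Pi phi i\<parallel>^2\<close> because \<open>Pi\<close> is a projector;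
  by Cauchy-Schwarz the latter is at most \<open>d * (\<Sum>i<d. alpha i ^ 2 * \<parallel>Pi phi i\<parallel>^2) = d * Tr(Pi rho)\<close>.
  If \<open>Pi\<close> does not cross the cut, it is of the form \<open>A \<otimes> 1\<close> or \<open>1 \<otimes> B\<close> with respect to the
  first qudit versus the rest, so \<open><phi i|Pi|phi j> = 0\<close> for \<open>i \<noteq> j\<close> by orthonormality of the
  \<open>w i\<close> or of the \<open>v i\<close>, and the two traces coincide.\<close>

lemma sum_squared_le_card_mult_sum_squares:
  fixes a :: "'k \<Rightarrow> real"
  shows "(\<Sum>i\<in>K. a i)\<^sup>2 \<le> real (card K) * (\<Sum>i\<in>K. (a i)\<^sup>2)"
proof -
  have "0 \<le> (\<Sum>i\<in>K. \<Sum>j\<in>K. (a i - a j)\<^sup>2)"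
    by (intro sum_nonneg) auto
  also have "\<dots> = (\<Sum>i\<in>K. \<Sum>j\<in>K. (a i)\<^sup>2) + (\<Sum>i\<in>K. \<Sum>j\<in>K. (a j)\<^sup>2) - 2 * (\<Sum>i\<in>K. \<Sum>j\<in>K. a i * a j)"
    by (simp add: power2_diff sum.distrib sum_subtractf sum_distrib_left mult.assoc)
  also have "\<dots> = 2 * (real (card K) * (\<Sum>i\<in>K. (a i)\<^sup>2)) - 2 * (\<Sum>i\<in>K. a i)\<^sup>2"
    by (simp add: sum.swap[of "\<lambda>i j. (a j)\<^sup>2"] sum_product[symmetric] power2_eq_square sum_distrib_left)
  finally show ?thesis by simp
qed

lemma cmod_sum_squared_le: "(cmod (\<Sum>i\<in>K. u i))\<^sup>2 \<le> real (card K) * (\<Sum>i\<in>K. (cmod (u i))\<^sup>2)"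
proof -
  have "(cmod (\<Sum>i\<in>K. u i))\<^sup>2 \<le> (\<Sum>i\<in>K. cmod (u i))\<^sup>2"
    by (simp add: norm_sum power_mono)
  also have "\<dots> \<le> real (card K) * (\<Sum>i\<in>K. (cmod (u i))\<^sup>2)"
    by (rule sum_squared_le_card_mult_sum_squares)
  finally show ?thesis .
qed

lemma sum_sum_eq_diagonal:
  assumes "finite K" and "\<And>i j. i \<in> K \<Longrightarrow> j \<in> K \<Longrightarrow> i \<noteq> j \<Longrightarrow> f i j = 0"
  shows "(\<Sum>i\<in>K. \<Sum>j\<in>K. f i j) = (\<Sum>i\<in>K. f i i)"
proof (rule sum.cong[OF refl])
  fix i assume i: "i \<in> K"
  have "(\<Sum>j\<in>K. f i j) = (\<Sum>j\<in>K. if j = i then f i i else 0)"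
    using assms(2) i by (intro sum.cong refl) auto
  also have "\<dots> = f i i"
    using assms(1) i by simp
  finally show "(\<Sum>j\<in>K. f i j) = f i i" .
qed

lemma divide_of_nat_le_complex:
  fixes x y :: complex
  assumes "x \<le> of_nat d * y" and "d > 0"
  shows "x / of_nat d \<le> y"
proof -
  have "x * (1 / of_nat d) \<le> of_nat d * y * (1 / of_nat d)"
    by (rule mult_right_mono[OF assms(1)]) (simp add: less_eq_complex_def)
  thus ?thesis using assms(2) by simp
qed

definition sesq_form :: "'i set \<Rightarrow> ('i \<Rightarrow> 'i \<Rightarrow> complex) \<Rightarrow> ('i \<Rightarrow> complex) \<Rightarrow> ('i \<Rightarrow> complex) \<Rightarrow> complex" where
  "sesq_form I A a b = (\<Sum>x\<in>I. \<Sum>z\<in>I. cnj (a x) * A x z * b z)"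

definition mat_vec :: "'i set \<Rightarrow> ('i \<Rightarrow> 'i \<Rightarrow> complex) \<Rightarrow> ('i \<Rightarrow> complex) \<Rightarrow> 'i \<Rightarrow> complex" where
  "mat_vec I A a = (\<lambda>x. \<Sum>z\<in>I. A x z * a z)"

lemma sesq_form_mat_vec: "sesq_form I A a b = (\<Sum>x\<in>I. cnj (a x) * mat_vec I A b x)"
  unfolding sesq_form_def mat_vec_def by (simp add: sum_distrib_left mult.assoc)

lemma sesq_form_cong:
  assumes "\<And>x. x \<in> I \<Longrightarrow> a x = a' x" and "\<And>x. x \<in> I \<Longrightarrow> b x = b' x"
  shows "sesq_form I A a b = sesq_form I A a' b'"
  unfolding sesq_form_def using assms by (intro sum.cong refl) simp

lemma sesq_form_sum:
  "sesq_form I A (\<lambda>x. \<Sum>i\<in>K. c i * f i x) (\<lambda>x. \<Sum>j\<in>L. c' j * g j x)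
     = (\<Sum>i\<in>K. \<Sum>j\<in>L. cnj (c i) * c' j * sesq_form I A (f i) (g j))"
proof -
  have "sesq_form I A (\<lambda>x. \<Sum>i\<in>K. c i * f i x) (\<lambda>x. \<Sum>j\<in>L. c' j * g j x)
      = (\<Sum>x\<in>I. \<Sum>z\<in>I. \<Sum>i\<in>K. \<Sum>j\<in>L. cnj (c i) * c' j * (cnj (f i x) * A x z * g j z))"
    unfolding sesq_form_def cnj_sum sum_distrib_left sum_distrib_right
    by (intro sum.cong refl) (subst sum.swap, simp add: mult_ac)
  also have "\<dots> = (\<Sum>i\<in>K. \<Sum>j\<in>L. \<Sum>x\<in>I. \<Sum>z\<in>I. cnj (c i) * c' j * (cnj (f i x) * A x z * g j z))"
    by (subst sum.swap, subst (2) sum.swap, rule sum.cong[OF refl], subst sum.swap, subst (2) sum.swap, simp)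
  finally show ?thesis
    unfolding sesq_form_def by (simp add: sum_distrib_left)
qed

lemma mat_vec_sum:
  "mat_vec I A (\<lambda>z. \<Sum>i\<in>K. c i * f i z) x = (\<Sum>i\<in>K. c i * mat_vec I A (f i) x)"
  unfolding mat_vec_def sum_distrib_left by (subst sum.swap) (simp add: mult_ac)

lemma mtrace_mmult_outer: "mtrace I (mmult I A (outer a b)) = sesq_form I A b a"
  unfolding mtrace_def mmult_def outer_def sesq_form_def
  by (intro sum.cong refl) (simp add: sum_distrib_left mult_ac)

lemma mtrace_mmult_sum_outer:
  "mtrace I (mmult I A (\<lambda>x y. \<Sum>i\<in>K. c i * (f i x * cnj (f i y))))
     = (\<Sum>i\<in>K. c i * sesq_form I A (f i) (f i))"
proof -
  have "mtrace I (mmult I A (\<lambda>x y. \<Sum>i\<in>K. c i * (f i x * cnj (f i y))))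
      = (\<Sum>x\<in>I. \<Sum>z\<in>I. \<Sum>i\<in>K. c i * (cnj (f i x) * A x z * f i z))"
    unfolding mtrace_def mmult_def by (intro sum.cong refl) (simp add: sum_distrib_left mult_ac)
  also have "\<dots> = (\<Sum>i\<in>K. c i * sesq_form I A (f i) (f i))"
    unfolding sesq_form_def sum_distrib_left
    by (subst sum.swap, subst (2) sum.swap, simp)
  finally show ?thesis .
qed

lemma sesq_form_projector_self:
  assumes "is_projector I H" and "finite I"
  shows "sesq_form I H a a = of_real (\<Sum>x\<in>I. (cmod (mat_vec I H a x))\<^sup>2)"
proof -
  define b where "b = mat_vec I H a"
  have herm: "H x z = cnj (H z x)" and idem: "mmult I H H x z = H x z"
    if "x \<in> I" "z \<in> I" for x z
    using assms(1) that unfolding is_projector_def by meson+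
  have b_fixed: "mat_vec I H b x = b x" if "x \<in> I" for x
  proof -
    have "mat_vec I H b x = (\<Sum>z\<in>I. mmult I H H x z * a z)"
      unfolding b_def mat_vec_def mmult_def sum_distrib_left sum_distrib_right
      by (subst sum.swap) (simp add: mult.assoc)
    also have "\<dots> = b x"
      unfolding b_def mat_vec_def using idem[OF that] by simp
    finally show ?thesis .
  qed
  have "sesq_form I H a a = (\<Sum>x\<in>I. cnj (a x) * mat_vec I H b x)"
    unfolding sesq_form_mat_vec b_def[symmetric] using b_fixed by simp
  also have "\<dots> = (\<Sum>z\<in>I. (\<Sum>x\<in>I. cnj (a x) * H x z) * b z)"
    unfolding mat_vec_def sum_distrib_left sum_distrib_right
    by (subst sum.swap) (simp add: mult.assoc)
  also have "\<dots> = (\<Sum>z\<in>I. cnj (b z) * b z)"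
  proof (intro sum.cong refl)
    fix z assume z: "z \<in> I"
    have "(\<Sum>x\<in>I. cnj (a x) * H x z) = cnj (b z)"
      unfolding b_def mat_vec_def cnj_sum by (intro sum.cong refl) (simp add: herm[OF _ z] mult.commute)
    thus "(\<Sum>x\<in>I. cnj (a x) * H x z) * b z = cnj (b z) * b z" by simp
  qed
  also have "\<dots> = of_real (\<Sum>x\<in>I. (cmod (b x))\<^sup>2)"
    by (simp add: complex_norm_square mult.commute flip: of_real_power)
  finally show ?thesis unfolding b_def .
qed

lemma sesq_form_projector_sum_le:
  fixes K :: "'k set" and c :: "'k \<Rightarrow> complex" and f :: "'k \<Rightarrow> 'i \<Rightarrow> complex"
  assumes "is_projector I H" and "finite I"
  defines "g \<equiv> \<lambda>x. \<Sum>i\<in>K. c i * f i x"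
  shows "sesq_form I H g g
           \<le> of_nat (card K) * (\<Sum>i\<in>K. of_real ((cmod (c i))\<^sup>2) * sesq_form I H (f i) (f i))"
proof -
  let ?norm2 = "\<lambda>h. \<Sum>x\<in>I. (cmod (mat_vec I H h x))\<^sup>2"
  have "?norm2 g \<le> (\<Sum>x\<in>I. real (card K) * (\<Sum>i\<in>K. (cmod (c i * mat_vec I H (f i) x))\<^sup>2))"
    unfolding g_def mat_vec_sum by (intro sum_mono cmod_sum_squared_le)
  also have "\<dots> = real (card K) * (\<Sum>i\<in>K. (cmod (c i))\<^sup>2 * ?norm2 (f i))"
    by (simp add: norm_mult power_mult_distrib sum_distrib_left sum.swap[of _ I])
  finally have "complex_of_real (?norm2 g)
      \<le> complex_of_real (real (card K) * (\<Sum>i\<in>K. (cmod (c i))\<^sup>2 * ?norm2 (f i)))"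
    by (simp only: less_eq_complex_def Re_complex_of_real Im_complex_of_real)
  thus ?thesis
    by (simp only: sesq_form_projector_self[OF assms(1,2)] of_real_mult of_real_sum of_real_of_nat_eq)
qed

lemma finite_configs: "finite I \<Longrightarrow> finite (configs I d)"
proof -
  assume "finite I"
  have "configs I d = {f. \<forall>x. (x \<in> I \<longrightarrow> f x \<in> {..<d}) \<and> (x \<notin> I \<longrightarrow> f x = 0)}"
    unfolding configs_def by auto
  thus ?thesis using finite_set_of_finite_funs[OF \<open>finite I\<close>, of "{..<d}" 0] by simp
qed

lemma restr_in_configs: "x \<in> configs I d \<Longrightarrow> S \<subseteq> I \<Longrightarrow> restr S x \<in> configs S d"
  unfolding configs_def restr_def by auto

definition merge_cfg :: "nat set \<Rightarrow> (nat \<Rightarrow> nat) \<Rightarrow> (nat \<Rightarrow> nat) \<Rightarrow> (nat \<Rightarrow> nat)" where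
  "merge_cfg S c x = (\<lambda>k. if k \<in> S then c k else x k)"

lemma sum_configs_agreeing_outside:
  assumes S: "S \<subseteq> {..<n}" and x: "x \<in> configs {..<n} d"
  shows "(\<Sum>z\<in>{z \<in> configs {..<n} d. \<forall>k\<in>{..<n} - S. x k = z k}. f z)
       = (\<Sum>c\<in>configs S d. f (merge_cfg S c x))"
proof (rule sum.reindex_bij_witness[where i = "\<lambda>c. merge_cfg S c x" and j = "restr S"])
  fix c assume "c \<in> configs S d"
  thus "restr S (merge_cfg S c x) = c"
    and "merge_cfg S c x \<in> {z \<in> configs {..<n} d. \<forall>k\<in>{..<n} - S. x k = z k}"
    using S x unfolding restr_def merge_cfg_def configs_def by auto
next
  fix z assume z: "z \<in> {z \<in> configs {..<n} d. \<forall>k\<in>{..<n} - S. x k = z k}"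
  show "merge_cfg S (restr S z) x = z"
  proof
    fix k show "merge_cfg S (restr S z) x k = z k"
      using z x unfolding merge_cfg_def restr_def configs_def by (cases "k < n") auto
  qed
  thus "f (merge_cfg S (restr S z) x) = f z" by simp
  show "restr S z \<in> configs S d" using z S restr_in_configs by blast
qed

lemma is_projector_embed_op:
  assumes S: "S \<subseteq> {..<n}" and P: "is_projector (configs S d) P"
  shows "is_projector (configs {..<n} d) (embed_op n S P)"
  unfolding is_projector_def
proof (intro ballI conjI)
  fix x y assume x: "x \<in> configs {..<n} d" and y: "y \<in> configs {..<n} d"
  have Px: "restr S x \<in> configs S d" and Py: "restr S y \<in> configs S d"
    using restr_in_configs S x y by auto
  have "P (restr S x) (restr S y) = cnj (P (restr S y) (restr S x))"
    and P_idem: "mmult (configs S d) P P (restr S x) (restr S y) = P (restr S x) (restr S y)"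
    using P Px Py unfolding is_projector_def by meson+
  moreover have "(\<forall>k\<in>{..<n} - S. x k = y k) = (\<forall>k\<in>{..<n} - S. y k = x k)" by auto
  ultimately show "embed_op n S P x y = cnj (embed_op n S P y x)"
    unfolding embed_op_def by simp
  let ?agree = "\<lambda>x y. \<forall>k\<in>{..<n} - S. x k = y k"
  have restr_merge: "restr S (merge_cfg S c x) = c" if "c \<in> configs S d" for c
    using that unfolding restr_def merge_cfg_def configs_def by auto
  have agree_merge: "?agree x (merge_cfg S c x)" "?agree (merge_cfg S c x) y = ?agree x y" for c
    unfolding merge_cfg_def by auto
  have "mmult (configs {..<n} d) (embed_op n S P) (embed_op n S P) x y
      = (\<Sum>z\<in>{z \<in> configs {..<n} d. ?agree x z}. embed_op n S P x z * embed_op n S P z y)"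
    unfolding mmult_def
    by (rule sum.mono_neutral_right) (auto simp: finite_configs embed_op_def)
  also have "\<dots> = (\<Sum>c\<in>configs S d. P (restr S x) c * P c (restr S y) * (if ?agree x y then 1 else 0))"
    unfolding sum_configs_agreeing_outside[OF S x]
    by (intro sum.cong refl) (simp add: embed_op_def restr_merge agree_merge)
  also have "\<dots> = mmult (configs S d) P P (restr S x) (restr S y) * (if ?agree x y then 1 else 0)"
    unfolding mmult_def by (simp add: sum_distrib_right)
  also have "\<dots> = embed_op n S P x y"
    unfolding P_idem embed_op_def ..
  finally show "mmult (configs {..<n} d) (embed_op n S P) (embed_op n S P) x y = embed_op n S P x y" .
qed

definition cons_cfg :: "nat \<Rightarrow> (nat \<Rightarrow> nat) \<Rightarrow> (nat \<Rightarrow> nat)" where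
  "cons_cfg a y = (\<lambda>k. if k = 0 then a else y (k - 1))"

lemma cons_cfg_0 [simp]: "cons_cfg a y 0 = a"
  by (simp add: cons_cfg_def)

lemma tail_cfg_cons_cfg [simp]: "tail_cfg (cons_cfg a y) = y"
  by (simp add: cons_cfg_def tail_cfg_def)

lemma sum_configs_cons:
  assumes "n \<ge> 1"
  shows "(\<Sum>x\<in>configs {..<n} d. f x) = (\<Sum>a<d. \<Sum>y\<in>configs {..<n-1} d. f (cons_cfg a y))"
proof -
  have "(\<Sum>x\<in>configs {..<n} d. f x) = (\<Sum>(a, y)\<in>{..<d} \<times> configs {..<n-1} d. f (cons_cfg a y))"
  proof (rule sum.reindex_bij_witness[where i = "\<lambda>(a, y). cons_cfg a y" and j = "\<lambda>x. (x 0, tail_cfg x)"])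
    fix x assume "x \<in> configs {..<n} d"
    moreover have "cons_cfg (x 0) (tail_cfg x) = x"
      unfolding cons_cfg_def tail_cfg_def by auto
    ultimately show "(\<lambda>(a, y). cons_cfg a y) (x 0, tail_cfg x) = x"
      and "(x 0, tail_cfg x) \<in> {..<d} \<times> configs {..<n-1} d"
      and "(\<lambda>(a, y). f (cons_cfg a y)) (x 0, tail_cfg x) = f x"
      using assms unfolding configs_def tail_cfg_def by auto
  next
    fix p assume "p \<in> {..<d} \<times> configs {..<n-1} d"
    thus "((\<lambda>(a, y). cons_cfg a y) p 0, tail_cfg ((\<lambda>(a, y). cons_cfg a y) p)) = p"
      by auto
    show "(\<lambda>(a, y). cons_cfg a y) p \<in> configs {..<n} d"
      using \<open>p \<in> _\<close> assms unfolding configs_def cons_cfg_def by auto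
  qed
  thus ?thesis by (simp add: sum.cartesian_product)
qed

definition tensor_vec :: "(nat \<Rightarrow> complex) \<Rightarrow> ((nat \<Rightarrow> nat) \<Rightarrow> complex) \<Rightarrow> (nat \<Rightarrow> nat) \<Rightarrow> complex" where
  "tensor_vec u v = (\<lambda>x. u (x 0) * v (tail_cfg x))"

lemma sesq_form_id:
  assumes "finite I"
  shows "sesq_form I (\<lambda>x y. if x = y then 1 else 0) a b = (\<Sum>x\<in>I. cnj (a x) * b x)"
  unfolding sesq_form_def using assms by (simp add: if_distrib if_distribR cong: if_cong)

lemma sesq_form_tensor_vec:
  assumes "n \<ge> 1"
    and "\<And>a b y y'. a < d \<Longrightarrow> b < d \<Longrightarrow> y \<in> configs {..<n-1} d \<Longrightarrow> y' \<in> configs {..<n-1} d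
           \<Longrightarrow> H (cons_cfg a y) (cons_cfg b y') = F a b * G y y'"
  shows "sesq_form (configs {..<n} d) H (tensor_vec u v) (tensor_vec u' v')
       = sesq_form {..<d} F u u' * sesq_form (configs {..<n-1} d) G v v'"
proof -
  let ?M = "configs {..<n-1} d"
  have "sesq_form (configs {..<n} d) H (tensor_vec u v) (tensor_vec u' v')
      = (\<Sum>a<d. \<Sum>y\<in>?M. \<Sum>b<d. \<Sum>y'\<in>?M. (cnj (u a) * F a b * u' b) * (cnj (v y) * G y y' * v' y'))"
    unfolding sesq_form_def sum_configs_cons[OF assms(1)] tensor_vec_def
    by (intro sum.cong refl) (simp add: assms(2) mult_ac)
  also have "\<dots> = sesq_form {..<d} F u u' * sesq_form ?M G v v'"
    by (simp only: sesq_form_def sum_product)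
  finally show ?thesis .
qed

lemma embed_op_cons_cfg_untouched_head:
  assumes "0 \<notin> S" and "n \<ge> 1"
  shows "embed_op n S P (cons_cfg a y) (cons_cfg b y')
       = (if a = b then 1 else 0) * embed_op n S P (cons_cfg 0 y) (cons_cfg 0 y')"
proof -
  have "restr S (cons_cfg c z) = (\<lambda>k. if k \<in> S then z (k - 1) else 0)" for c z
    using assms(1) unfolding restr_def cons_cfg_def by (intro ext) auto
  moreover have "(\<forall>k\<in>{..<n} - S. cons_cfg a y k = cons_cfg b y' k)
      \<longleftrightarrow> a = b \<and> (\<forall>k\<in>{..<n} - S. cons_cfg 0 y k = cons_cfg 0 y' k)"
    using assms unfolding cons_cfg_def by force
  ultimately show ?thesis
    unfolding embed_op_def by simp
qed

lemma embed_op_cons_cfg_untouched_tail: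
  assumes "S \<subseteq> {0}" and "y \<in> configs {..<n-1} d" and "y' \<in> configs {..<n-1} d"
  shows "embed_op n S P (cons_cfg a y) (cons_cfg b y')
       = embed_op n S P (cons_cfg a (\<lambda>_. 0)) (cons_cfg b (\<lambda>_. 0)) * (if y = y' then 1 else 0)"
proof -
  have "restr S (cons_cfg c z) = (\<lambda>k. if k \<in> S then c else 0)" for c z
    using assms(1) unfolding restr_def cons_cfg_def by (intro ext) auto
  moreover have "(\<forall>k\<in>{..<n} - S. cons_cfg a y k = cons_cfg b y' k)
      \<longleftrightarrow> (\<forall>k\<in>{..<n} - S. cons_cfg a (\<lambda>_. 0) k = cons_cfg b (\<lambda>_. 0) k) \<and> y = y'"
  proof -
    have "y = y' \<longleftrightarrow> (\<forall>m<n-1. y m = y' m)"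
      using assms(2,3) unfolding configs_def by (auto intro!: ext) (metis)
    also have "\<dots> \<longleftrightarrow> (\<forall>k\<in>{..<n} - S. k \<noteq> 0 \<longrightarrow> y (k - 1) = y' (k - 1))"
      using assms(1) by (auto dest: bspec[of _ _ "Suc _"])
    finally show ?thesis
      unfolding cons_cfg_def by auto
  qed
  ultimately show ?thesis
    unfolding embed_op_def by simp
qed

lemma sesq_form_embed_op_tensor_vec_orthogonal:
  assumes n: "n \<ge> 1" and one_side: "0 \<notin> S \<or> S \<subseteq> {0}"
    and w: "orthonormal_fam d {..<d} w" and v: "orthonormal_fam d (configs {..<n-1} d) v"
    and ij: "i < d" "j < d" "i \<noteq> j"
  shows "sesq_form (configs {..<n} d) (embed_op n S P) (tensor_vec (w i) (v i)) (tensor_vec (w j) (v j)) = 0"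
proof -
  let ?M = "configs {..<n-1} d"
  let ?id = "\<lambda>x y. if x = y then 1 else 0"
  from one_side show ?thesis
  proof
    assume "0 \<notin> S"
    hence "sesq_form (configs {..<n} d) (embed_op n S P) (tensor_vec (w i) (v i)) (tensor_vec (w j) (v j))
        = sesq_form {..<d} ?id (w i) (w j)
          * sesq_form ?M (\<lambda>y y'. embed_op n S P (cons_cfg 0 y) (cons_cfg 0 y')) (v i) (v j)"
      using n by (intro sesq_form_tensor_vec embed_op_cons_cfg_untouched_head) (simp_all add: \<open>0 \<notin> S\<close>)
    also have "sesq_form {..<d} ?id (w i) (w j) = 0"
      using w ij by (simp add: sesq_form_id orthonormal_fam_def)
    finally show ?thesis by simp
  next
    assume "S \<subseteq> {0}"
    hence "sesq_form (configs {..<n} d) (embed_op n S P) (tensor_vec (w i) (v i)) (tensor_vec (w j) (v j))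
        = sesq_form {..<d} (\<lambda>a b. embed_op n S P (cons_cfg a (\<lambda>_. 0)) (cons_cfg b (\<lambda>_. 0))) (w i) (w j)
          * sesq_form ?M ?id (v i) (v j)"
      using n by (intro sesq_form_tensor_vec embed_op_cons_cfg_untouched_tail) (simp_all add: \<open>S \<subseteq> {0}\<close>)
    also have "sesq_form ?M ?id (v i) (v j) = 0"
      using v ij by (simp add: sesq_form_id finite_configs orthonormal_fam_def)
    finally show ?thesis by simp
  qed
qed

theorem lemma1:
  fixes n d :: nat
    and \<alpha> :: "nat \<Rightarrow> real"
    and w :: "nat \<Rightarrow> nat \<Rightarrow> complex"
    and v :: "nat \<Rightarrow> (nat \<Rightarrow> nat) \<Rightarrow> complex"
    and \<psi> :: "(nat \<Rightarrow> nat) \<Rightarrow> complex"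
    and S :: "nat set"
    and P :: "(nat \<Rightarrow> nat) \<Rightarrow> (nat \<Rightarrow> nat) \<Rightarrow> complex"
  assumes n2: "n \<ge> 2"
    and unit: "(\<Sum>x\<in>configs {..<n} d. (cmod (\<psi> x))\<^sup>2) = 1"
    and alpha_nonneg: "\<forall>i<d. \<alpha> i \<ge> 0"
    and w_on: "orthonormal_fam d {..<d} w"
    and v_on: "orthonormal_fam d (configs {..<n-1} d) v"
    and schmidt: "\<forall>x\<in>configs {..<n} d.
        \<psi> x = (\<Sum>i<d. complex_of_real (\<alpha> i) * w i (x 0) * v i (tail_cfg x))"
    and S_sub: "S \<subseteq> {..<n}"
    and proj: "is_projector (configs S d) P"
  defines "\<rho> \<equiv> (\<lambda>x y. \<Sum>i<d. complex_of_real ((\<alpha> i)\<^sup>2) *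
        (w i (x 0) * cnj (w i (y 0))) * (v i (tail_cfg x) * cnj (v i (tail_cfg y))))"
    and "\<Pi> \<equiv> embed_op n S P"
    and "N \<equiv> configs {..<n} d"
  shows "(0 \<in> S \<and> S \<inter> {1..<n} \<noteq> {} \<longrightarrow>
            mtrace N (mmult N \<Pi> \<rho>) \<ge> mtrace N (mmult N \<Pi> (outer \<psi> \<psi>)) / of_nat d)
       \<and> (\<not> (0 \<in> S \<and> S \<inter> {1..<n} \<noteq> {}) \<longrightarrow>
            mtrace N (mmult N \<Pi> \<rho>) = mtrace N (mmult N \<Pi> (outer \<psi> \<psi>)))"
proof -
  define \<phi> where "\<phi> = (\<lambda>i. tensor_vec (w i) (v i))"
  define g where "g = (\<lambda>x. \<Sum>i<d. complex_of_real (\<alpha> i) * \<phi> i x)"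
  have finN: "finite N"
    unfolding N_def by (simp add: finite_configs)
  have proj_\<Pi>: "is_projector N \<Pi>"
    unfolding N_def \<Pi>_def using S_sub proj by (rule is_projector_embed_op)
  have tr_\<psi>: "mtrace N (mmult N \<Pi> (outer \<psi> \<psi>)) = sesq_form N \<Pi> g g"
    unfolding mtrace_mmult_outer using schmidt
    by (intro sesq_form_cong) (simp_all add: N_def g_def \<phi>_def tensor_vec_def mult.assoc)
  have "\<rho> = (\<lambda>x y. \<Sum>i<d. complex_of_real ((\<alpha> i)\<^sup>2) * (\<phi> i x * cnj (\<phi> i y)))"
    unfolding \<rho>_def \<phi>_def tensor_vec_def by (simp add: mult_ac)
  hence tr_\<rho>: "mtrace N (mmult N \<Pi> \<rho>) = (\<Sum>i<d. complex_of_real ((\<alpha> i)\<^sup>2) * sesq_form N \<Pi> (\<phi> i) (\<phi> i))"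
    by (simp add: mtrace_mmult_sum_outer)
  show ?thesis
  proof (intro conjI impI)
    have "sesq_form N \<Pi> g g \<le> of_nat d * mtrace N (mmult N \<Pi> \<rho>)"
      using sesq_form_projector_sum_le[OF proj_\<Pi> finN, where K = "{..<d}" and c = "\<lambda>i. of_real (\<alpha> i)" and f = \<phi>]
      by (simp add: g_def tr_\<rho>)
    thus "mtrace N (mmult N \<Pi> (outer \<psi> \<psi>)) / of_nat d \<le> mtrace N (mmult N \<Pi> \<rho>)"
      unfolding tr_\<psi> by (cases "d = 0") (simp_all add: tr_\<rho> divide_of_nat_le_complex)
  next
    assume "\<not> (0 \<in> S \<and> S \<inter> {1..<n} \<noteq> {})"
    with S_sub have "0 \<notin> S \<or> S \<subseteq> {0}"
      by (auto simp: disjoint_iff) (metis Suc_leI atLeastLessThan_iff lessThan_iff not_gr0 subsetD)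
    hence "sesq_form N \<Pi> (\<phi> i) (\<phi> j) = 0" if "i < d" "j < d" "i \<noteq> j" for i j
      unfolding N_def \<Pi>_def \<phi>_def using n2 w_on v_on that
      by (intro sesq_form_embed_op_tensor_vec_orthogonal) simp_all
    hence "sesq_form N \<Pi> g g = (\<Sum>i<d. complex_of_real ((\<alpha> i)\<^sup>2) * sesq_form N \<Pi> (\<phi> i) (\<phi> i))"
      unfolding g_def sesq_form_sum by (subst sum_sum_eq_diagonal) (simp_all add: power2_eq_square)
    thus "mtrace N (mmult N \<Pi> \<rho>) = mtrace N (mmult N \<Pi> (outer \<psi> \<psi>))"
      using tr_\<psi> tr_\<rho> by simp
  qed
qed

end
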